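(* Let $A$ be an $\mathbb{R}$-algebra and $B$ an $A$-algebra. If $B$ has the substitution property over $A$ along algebraic formal arcs or along algebraic Puiseux arcs, then $B$ has the weak substitution property on points over $A$.
   Context: $\mathbb{R}[[t]]_{\mathrm{alg}}$ is the ring of formal power series in $t$ algebraic over $\mathbb{R}[t]$; $\mathbb{R}[[t^*]]_{\mathrm{alg}}$ is the ring of Puiseux series $\sum_{i\ge0}a_it^{i/m}$ of non-negative order algebraic over $\mathbb{R}[t]$. $B$ has the substitution property along algebraic formal (resp. Puiseux) arcs if every morphism $A\to\mathbb{R}[[t]]_{\mathrm{alg}}$ (resp. $A\to\mathbb{R}[[t^*]]_{\mathrm{alg}}$) admits one and only one lifting to $B$ (a morphism from $B$ whose composition with the structure map $A\to B$ is the given one). $B$ has the weak substitution property over $A$ if every morphism $A\to\mathbb{R}$ admits one and only one lifting to $B$. *)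

theory Defs
  imports Complex_Main "HOL-Computational_Algebra.Polynomial_FPS"
begin

definition alg_hom_into ::
  "'c set \<Rightarrow> ('c \<Rightarrow> 'c \<Rightarrow> 'c) \<Rightarrow> ('c \<Rightarrow> 'c \<Rightarrow> 'c) \<Rightarrow> (real \<Rightarrow> 'c)
   \<Rightarrow> ('a::{comm_ring_1,real_algebra_1} \<Rightarrow> 'c) \<Rightarrow> bool" where
  "alg_hom_into S pl ml emb h \<longleftrightarrow>
     (\<forall>x. h x \<in> S) \<and> (\<forall>x y. h (x + y) = pl (h x) (h y)) \<and>
     (\<forall>x y. h (x * y) = ml (h x) (h y)) \<and> (\<forall>r. h (of_real r) = emb r)"

definition subst_prop ::
  "'c set \<Rightarrow> ('c \<Rightarrow> 'c \<Rightarrow> 'c) \<Rightarrow> ('c \<Rightarrow> 'c \<Rightarrow> 'c) \<Rightarrow> (real \<Rightarrow> 'c)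
   \<Rightarrow> ('a::{comm_ring_1,real_algebra_1} \<Rightarrow> 'b::{comm_ring_1,real_algebra_1}) \<Rightarrow> bool" where
  "subst_prop S pl ml emb i \<longleftrightarrow>
     (\<forall>h :: 'a \<Rightarrow> 'c. alg_hom_into S pl ml emb h \<longrightarrow>
        (\<exists>!g :: 'b \<Rightarrow> 'c. alg_hom_into S pl ml emb g \<and> g \<circ> i = h))"

definition alg_fps :: "real fps set" where
  "alg_fps = {f. \<exists>P :: real poly poly. P \<noteq> 0 \<and> poly (map_poly fps_of_poly P) f = 0}"

text \<open>Puiseux series as coefficient functions on the rationals: sum_q a(q) t^q.\<close>
definition puiseux :: "(rat \<Rightarrow> real) set" where
  "puiseux = {a. \<exists>m::nat. m > 0 \<and> (\<forall>q. a q \<noteq> 0 \<longrightarrow> q \<ge> 0 \<and> q * of_nat m \<in> \<int>)}"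

definition pz_mul :: "(rat \<Rightarrow> real) \<Rightarrow> (rat \<Rightarrow> real) \<Rightarrow> (rat \<Rightarrow> real)" where
  "pz_mul a b = (\<lambda>q. \<Sum>r\<in>{r. a r \<noteq> 0 \<and> b (q - r) \<noteq> 0}. a r * b (q - r))"

definition pz_add :: "(rat \<Rightarrow> real) \<Rightarrow> (rat \<Rightarrow> real) \<Rightarrow> (rat \<Rightarrow> real)" where
  "pz_add a b = (\<lambda>q. a q + b q)"

definition pz_const :: "real \<Rightarrow> (rat \<Rightarrow> real)" where
  "pz_const c = (\<lambda>q. if q = 0 then c else 0)"

definition pz_pow :: "(rat \<Rightarrow> real) \<Rightarrow> nat \<Rightarrow> (rat \<Rightarrow> real)" where
  "pz_pow a n = ((pz_mul a) ^^ n) (pz_const 1)"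

definition pz_of_poly :: "real poly \<Rightarrow> (rat \<Rightarrow> real)" where
  "pz_of_poly p = (\<lambda>q. if q \<in> \<nat> then coeff p (nat \<lfloor>q\<rfloor>) else 0)"

definition alg_puiseux :: "(rat \<Rightarrow> real) set" where
  "alg_puiseux = {a \<in> puiseux. \<exists>P :: real poly poly. P \<noteq> 0 \<and>
      (\<forall>q. (\<Sum>i\<le>degree P. pz_mul (pz_of_poly (coeff P i)) (pz_pow a i) q) = 0)}"

definition subst_formal_arcs ::
  "('a::{comm_ring_1,real_algebra_1} \<Rightarrow> 'b::{comm_ring_1,real_algebra_1}) \<Rightarrow> bool" where
  "subst_formal_arcs i \<longleftrightarrow> subst_prop alg_fps (+) (*) fps_const i"

definition subst_puiseux_arcs ::
  "('a::{comm_ring_1,real_algebra_1} \<Rightarrow> 'b::{comm_ring_1,real_algebra_1}) \<Rightarrow> bool" where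
  "subst_puiseux_arcs i \<longleftrightarrow> subst_prop alg_puiseux pz_add pz_mul pz_const i"

definition weak_subst ::
  "('a::{comm_ring_1,real_algebra_1} \<Rightarrow> 'b::{comm_ring_1,real_algebra_1}) \<Rightarrow> bool" where
  "weak_subst i \<longleftrightarrow> subst_prop (UNIV :: real set) (+) (*) (\<lambda>r. r) i"

end

theory Submission
  imports Defs
begin

text \<open>The reals are a retract of each arc ring: constants embed \<open>\<real>\<close> into the arcs, and
  evaluation at \<open>t = 0\<close> maps the arcs back onto \<open>\<real>\<close>, both compatibly with the ring structure.
  Unique lifting passes to retracts: a real point \<open>h\<close> of \<open>A\<close>, viewed as a constant arc, has a
  unique lift to \<open>B\<close>, and evaluating that lift at \<open>t = 0\<close> lifts \<open>h\<close>; conversely any lift \<open>k\<close> of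
  \<open>h\<close> yields the arc lift "constant arc of \<open>k\<close>", so it is the evaluation of the unique one.\<close>

definition target_hom ::
  "'c set \<Rightarrow> ('c \<Rightarrow> 'c \<Rightarrow> 'c) \<Rightarrow> ('c \<Rightarrow> 'c \<Rightarrow> 'c) \<Rightarrow> (real \<Rightarrow> 'c)
   \<Rightarrow> 'd set \<Rightarrow> ('d \<Rightarrow> 'd \<Rightarrow> 'd) \<Rightarrow> ('d \<Rightarrow> 'd \<Rightarrow> 'd) \<Rightarrow> (real \<Rightarrow> 'd) \<Rightarrow> ('c \<Rightarrow> 'd) \<Rightarrow> bool" where
  "target_hom S pl ml emb S' pl' ml' emb' \<phi> \<longleftrightarrow>
     (\<forall>x\<in>S. \<phi> x \<in> S') \<and>
     (\<forall>x\<in>S. \<forall>y\<in>S. \<phi> (pl x y) = pl' (\<phi> x) (\<phi> y)) \<and>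
     (\<forall>x\<in>S. \<forall>y\<in>S. \<phi> (ml x y) = ml' (\<phi> x) (\<phi> y)) \<and>
     (\<forall>r. \<phi> (emb r) = emb' r)"

lemma alg_hom_into_comp:
  assumes "target_hom S pl ml emb S' pl' ml' emb' \<phi>" and "alg_hom_into S pl ml emb h"
  shows "alg_hom_into S' pl' ml' emb' (\<phi> \<circ> h)"
  using assms by (simp add: target_hom_def alg_hom_into_def)

lemma subst_prop_retract:
  fixes i :: "'a::{comm_ring_1,real_algebra_1} \<Rightarrow> 'b::{comm_ring_1,real_algebra_1}"
    and \<sigma> :: "'d \<Rightarrow> 'c" and \<rho> :: "'c \<Rightarrow> 'd"
  assumes subst: "subst_prop S pl ml emb i"
    and sec: "target_hom S' pl' ml' emb' S pl ml emb \<sigma>"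
    and ret: "target_hom S pl ml emb S' pl' ml' emb' \<rho>"
    and ret_sec: "\<And>x. x \<in> S' \<Longrightarrow> \<rho> (\<sigma> x) = x"
  shows "subst_prop S' pl' ml' emb' i"
  unfolding subst_prop_def
proof (intro allI impI)
  fix h :: "'a \<Rightarrow> 'd" assume h: "alg_hom_into S' pl' ml' emb' h"
  then have "alg_hom_into S pl ml emb (\<sigma> \<circ> h)"
    by (rule alg_hom_into_comp[OF sec])
  then obtain g where g: "alg_hom_into S pl ml emb g" "g \<circ> i = \<sigma> \<circ> h"
    and g_unique: "\<And>g'. alg_hom_into S pl ml emb g' \<Longrightarrow> g' \<circ> i = \<sigma> \<circ> h \<Longrightarrow> g' = g"
    using subst unfolding subst_prop_def by metis
  have h_in: "h x \<in> S'" for x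
    using h by (simp add: alg_hom_into_def)
  show "\<exists>!k. alg_hom_into S' pl' ml' emb' k \<and> k \<circ> i = h"
  proof (rule ex1I[of _ "\<rho> \<circ> g"])
    have "(\<rho> \<circ> g) \<circ> i = \<rho> \<circ> \<sigma> \<circ> h"
      using g(2) by (simp add: comp_assoc)
    also have "\<dots> = h"
      using ret_sec h_in by (simp add: fun_eq_iff)
    finally show "alg_hom_into S' pl' ml' emb' (\<rho> \<circ> g) \<and> (\<rho> \<circ> g) \<circ> i = h"
      using alg_hom_into_comp[OF ret g(1)] by blast
  next
    fix k assume k: "alg_hom_into S' pl' ml' emb' k \<and> k \<circ> i = h"
    then have "\<sigma> \<circ> k = g"
      using g_unique alg_hom_into_comp[OF sec] by (metis comp_assoc)
    then have "\<rho> \<circ> g = \<rho> \<circ> \<sigma> \<circ> k"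
      by (simp add: comp_assoc)
    also have "\<dots> = k"
      using k ret_sec by (simp add: fun_eq_iff alg_hom_into_def)
    finally show "k = \<rho> \<circ> g" by simp
  qed
qed

lemma weak_subst_if_real_retract:
  assumes "subst_prop S pl ml emb i"
    and "target_hom UNIV (+) (*) (\<lambda>r. r) S pl ml emb emb"
    and "target_hom S pl ml emb UNIV (+) (*) (\<lambda>r. r) ev"
    and "\<And>r. ev (emb r) = r"
  shows "weak_subst i"
  unfolding weak_subst_def using assms by (rule subst_prop_retract)

lemma fps_const_in_alg_fps: "fps_const c \<in> alg_fps"
  unfolding alg_fps_def
  by (rule CollectI, rule exI[of _ "[:-[:c:], 1:]"]) (simp add: map_poly_pCons fps_of_poly_const)

lemma subst_formal_arcs_imp_weak_subst:
  assumes "subst_formal_arcs i"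
  shows "weak_subst i"
proof (rule weak_subst_if_real_retract[where ev = "\<lambda>f. fps_nth f 0"])
  show "subst_prop alg_fps (+) (*) fps_const i"
    using assms by (simp add: subst_formal_arcs_def)
  show "target_hom UNIV (+) (*) (\<lambda>r. r) alg_fps (+) (*) fps_const fps_const"
    by (simp add: target_hom_def fps_const_in_alg_fps fps_const_add fps_const_mult)
  show "target_hom alg_fps (+) (*) fps_const UNIV (+) (*) (\<lambda>r. r) (\<lambda>f. fps_nth f 0)"
    by (simp add: target_hom_def)
qed simp

lemma pz_mul_const_left: "pz_mul (pz_const c) b = (\<lambda>q. c * b q)"
proof
  fix q
  have "{r. pz_const c r \<noteq> 0 \<and> b (q - r) \<noteq> 0} = (if c = 0 \<or> b q = 0 then {} else {0})"
    by (auto simp: pz_const_def split: if_splits)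
  then show "pz_mul (pz_const c) b q = c * b q"
    by (simp add: pz_mul_def pz_const_def split: if_splits)
qed

lemma pz_mul_const_right: "pz_mul a (pz_const c) = (\<lambda>q. a q * c)"
proof
  fix q
  have "{r. a r \<noteq> 0 \<and> pz_const c (q - r) \<noteq> 0} = (if c = 0 \<or> a q = 0 then {} else {q})"
    by (auto simp: pz_const_def split: if_splits)
  then show "pz_mul a (pz_const c) q = a q * c"
    by (simp add: pz_mul_def pz_const_def split: if_splits)
qed

lemma pz_of_poly_const: "pz_of_poly [:d:] = pz_const d"
proof
  fix q
  show "pz_of_poly [:d:] q = pz_const d q"
  proof (cases "q \<in> \<nat>")
    case True
    then obtain n where "q = of_nat n" by (auto elim: Nats_cases)
    then show ?thesis by (simp add: pz_of_poly_def pz_const_def coeff_pCons split: nat.split)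
  next
    case False
    then show ?thesis by (auto simp: pz_of_poly_def pz_const_def)
  qed
qed

lemma pz_const_in_alg_puiseux: "pz_const c \<in> alg_puiseux"
proof -
  let ?P = "[:-[:c:], 1:] :: real poly poly"
  have "pz_const c \<in> puiseux"
    unfolding puiseux_def by (rule CollectI, rule exI[of _ 1]) (auto simp: pz_const_def)
  moreover have "(\<Sum>j\<le>degree ?P. pz_mul (pz_of_poly (coeff ?P j)) (pz_pow (pz_const c) j) q) = 0"
    for q
    using pz_of_poly_const[of 1]
    by (simp add: pCons_one pz_pow_def pz_mul_const_left pz_mul_const_right pz_of_poly_const)
      (simp add: pz_const_def)
  ultimately show ?thesis
    unfolding alg_puiseux_def by (intro CollectI conjI exI[of _ ?P]) auto
qed

lemma puiseux_vanishes_below_0: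
  assumes "a \<in> puiseux" and "q < 0"
  shows "a q = 0"
  using assms by (auto simp: puiseux_def)

lemma pz_mul_at_0:
  assumes "\<And>q. q < 0 \<Longrightarrow> a q = 0" and "\<And>q. q < 0 \<Longrightarrow> b q = 0"
  shows "pz_mul a b 0 = a 0 * b 0"
proof -
  have "r = 0" if "a r \<noteq> 0" "b (0 - r) \<noteq> 0" for r
    using assms[of r] assms[of "- r"] that by force
  then have "{r. a r \<noteq> 0 \<and> b (0 - r) \<noteq> 0} = (if a 0 = 0 \<or> b 0 = 0 then {} else {0})"
    by (auto; metis minus_zero)
  then show ?thesis
    by (simp add: pz_mul_def split: if_splits)
qed

lemma subst_puiseux_arcs_imp_weak_subst:
  assumes "subst_puiseux_arcs i"
  shows "weak_subst i"
proof (rule weak_subst_if_real_retract[where ev = "\<lambda>a. a 0"])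
  show "subst_prop alg_puiseux pz_add pz_mul pz_const i"
    using assms by (simp add: subst_puiseux_arcs_def)
  have "pz_const (r + s) = pz_add (pz_const r) (pz_const s)" for r s
    by (simp add: pz_add_def pz_const_def fun_eq_iff)
  moreover have "pz_const (r * s) = pz_mul (pz_const r) (pz_const s)" for r s
    by (simp add: pz_mul_const_left) (simp add: pz_const_def fun_eq_iff)
  ultimately show "target_hom UNIV (+) (*) (\<lambda>r. r) alg_puiseux pz_add pz_mul pz_const pz_const"
    by (simp add: target_hom_def pz_const_in_alg_puiseux)
  have "pz_mul a b 0 = a 0 * b 0" if "a \<in> alg_puiseux" "b \<in> alg_puiseux" for a b
    using that by (intro pz_mul_at_0) (auto simp: alg_puiseux_def puiseux_vanishes_below_0)
  then show "target_hom alg_puiseux pz_add pz_mul pz_const UNIV (+) (*) (\<lambda>r. r) (\<lambda>a. a 0)"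
    by (simp add: target_hom_def pz_add_def pz_const_def)
qed (simp add: pz_const_def)

theorem proposition3p3:
  fixes i :: "'a::{comm_ring_1,real_algebra_1} \<Rightarrow> 'b::{comm_ring_1,real_algebra_1}"
  assumes "alg_hom_into UNIV (+) (*) of_real i"
    and "subst_formal_arcs i \<or> subst_puiseux_arcs i"
  shows "weak_subst i"
  using assms(2) subst_formal_arcs_imp_weak_subst subst_puiseux_arcs_imp_weak_subst by blast

end
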